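(* Let $R$ be a preference profile and suppose that $x$ is a connector in $R$. Let $y\in A_x$. Then $A_y\subseteq A_x$ unless $x\succ_R A\setminus\{x,y\}$ (i.e., unless $x\succ_R z$ for all $z\in A\setminus\{x,y\}$).
   Context: Let $A$ be a finite set of alternatives; a preference profile $R$ assigns a strict total order $\succ_i$ on $A$ to each voter $i$ of a finite non-empty electorate. The majority margin is $g_R(x,y)=|\{i: x\succ_i y\}|-|\{i: y\succ_i x\}|$; $x\succsim_R y$ iff $g_R(x,y)\ge0$, with strict part $\succ_R$. For any set of alternatives $B$ and profile $R$ on $B$, a non-empty $X\subseteq B$ is dominant if $x\succ_R y$ for all $x\in X,y\in B\setminus X$; the top cycle $\mathrm{TC}(R)$ is the inclusion-smallest dominant set. For $x\in A$, $R|_{A\setminus\{x\}}$ denotes the profile on $A\setminus\{x\}$ obtained by restricting each voter's order. The connected set of $x$ is $A_x=\mathrm{TC}(R)\setminus(\mathrm{TC}(R|_{A\setminus\{x\}})\cup\{x\})$, and $x$ is a connector in $R$ if $A_x\neq\emptyset$. *)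

theory Defs
  imports Main
begin

text \<open>A preference profile on the alternatives A: a finite non-empty electorate N and,
for each voter i in N, a strict total order (R i) on A, where (a,b) \<in> R i means a \<succ>_i b.\<close>

definition profile :: "'v set \<Rightarrow> 'a set \<Rightarrow> ('v \<Rightarrow> ('a \<times> 'a) set) \<Rightarrow> bool" where
  "profile N A R \<longleftrightarrow> finite N \<and> N \<noteq> {} \<and> finite A \<and>
     (\<forall>i\<in>N. strict_linear_order_on A (R i) \<and> R i \<subseteq> A \<times> A)"

definition margin :: "'v set \<Rightarrow> ('v \<Rightarrow> ('a \<times> 'a) set) \<Rightarrow> 'a \<Rightarrow> 'a \<Rightarrow> int" where
  "margin N R x y = int (card {i\<in>N. (x,y) \<in> R i}) - int (card {i\<in>N. (y,x) \<in> R i})"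

definition maj_strict :: "'v set \<Rightarrow> ('v \<Rightarrow> ('a \<times> 'a) set) \<Rightarrow> 'a \<Rightarrow> 'a \<Rightarrow> bool" where
  "maj_strict N R x y \<longleftrightarrow> margin N R x y > 0"

text \<open>Dominant sets w.r.t. the profile R restricted to the alternative set B.
(Restricting each voter's order to B does not change margins between elements of B.)\<close>
definition dominant :: "'v set \<Rightarrow> ('v \<Rightarrow> ('a \<times> 'a) set) \<Rightarrow> 'a set \<Rightarrow> 'a set \<Rightarrow> bool" where
  "dominant N R B X \<longleftrightarrow> X \<noteq> {} \<and> X \<subseteq> B \<and> (\<forall>x\<in>X. \<forall>y\<in>B - X. maj_strict N R x y)"

definition top_cycle :: "'v set \<Rightarrow> ('v \<Rightarrow> ('a \<times> 'a) set) \<Rightarrow> 'a set \<Rightarrow> 'a set" where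
  "top_cycle N R B = (THE X. dominant N R B X \<and> (\<forall>Y. dominant N R B Y \<longrightarrow> X \<subseteq> Y))"

definition connected_set :: "'v set \<Rightarrow> 'a set \<Rightarrow> ('v \<Rightarrow> ('a \<times> 'a) set) \<Rightarrow> 'a \<Rightarrow> 'a set" where
  "connected_set N A R x = top_cycle N R A - (top_cycle N R (A - {x}) \<union> {x})"

definition connector :: "'v set \<Rightarrow> 'a set \<Rightarrow> ('v \<Rightarrow> ('a \<times> 'a) set) \<Rightarrow> 'a \<Rightarrow> bool" where
  "connector N A R x \<longleftrightarrow> x \<in> A \<and> connected_set N A R x \<noteq> {}"

end

theory Submission
  imports Defs
begin

text \<open>Since the strict majority relation is asymmetric, the dominant subsets of any set of
alternatives form a chain, and the top cycle is its least element. Let \<open>y \<in> A\<^sub>x\<close> and write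
\<open>T\<^sub>x\<close>, \<open>T\<^sub>y\<close> for the top cycles of \<open>A - {x}\<close> and \<open>A - {y}\<close>. Then \<open>T\<^sub>x\<close> beats \<open>y\<close>, and
\<open>T\<^sub>x\<close> and \<open>T\<^sub>y - {x}\<close> are both dominant in \<open>A - {x, y}\<close>, hence comparable. If \<open>x \<notin> T\<^sub>y\<close>, the
smaller of \<open>T\<^sub>x\<close> and \<open>T\<^sub>y\<close> beats both \<open>x\<close> and \<open>y\<close>, so it is dominant in \<open>A\<close> and contains
the top cycle of \<open>A\<close>, which is absurd as \<open>y \<notin> T\<^sub>x\<close>. Hence \<open>x \<in> T\<^sub>y\<close>. If \<open>T\<^sub>y \<noteq> {x}\<close>, the same comparison forces
\<open>T\<^sub>x \<subseteq> T\<^sub>y - {x}\<close>, so \<open>A\<^sub>y \<subseteq> A\<^sub>x\<close>; and \<open>T\<^sub>y = {x}\<close> means that \<open>x\<close> beats \<open>A - {x, y}\<close>.\<close>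

lemma maj_strict_asym: "maj_strict N R a b \<Longrightarrow> \<not> maj_strict N R b a"
  by (simp add: maj_strict_def margin_def)

lemma dominant_comparable:
  assumes "dominant N R B X" "dominant N R B Y"
  shows "X \<subseteq> Y \<or> Y \<subseteq> X"
proof (rule ccontr)
  assume "\<not> (X \<subseteq> Y \<or> Y \<subseteq> X)"
  then obtain a b where "a \<in> X" "a \<notin> Y" "b \<in> Y" "b \<notin> X" by blast
  with assms have "maj_strict N R a b" "maj_strict N R b a"
    unfolding dominant_def by auto
  then show False by (blast dest: maj_strict_asym)
qed

lemma ex_least_dominant:
  assumes "finite B" "B \<noteq> {}"
  shows "\<exists>X. dominant N R B X \<and> (\<forall>Y. dominant N R B Y \<longrightarrow> X \<subseteq> Y)"
proof -
  have "dominant N R B B"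
    using assms by (simp add: dominant_def)
  then obtain X where X: "dominant N R B X"
    and least: "\<And>Y. dominant N R B Y \<Longrightarrow> card X \<le> card Y"
    using ex_has_least_nat[where P = "dominant N R B" and m = card] by blast
  have "finite X"
    using X assms(1) unfolding dominant_def by (blast intro: finite_subset)
  have "X \<subseteq> Y" if Y: "dominant N R B Y" for Y
  proof (rule ccontr)
    assume "\<not> X \<subseteq> Y"
    with dominant_comparable[OF X Y] have "Y \<subset> X" by blast
    with \<open>finite X\<close> have "card Y < card X" by (rule psubset_card_mono)
    with least[OF Y] show False by simp
  qed
  with X show ?thesis by blast
qed

lemma top_cycle_least_dominant:
  assumes "finite B" "B \<noteq> {}"
  shows "dominant N R B (top_cycle N R B)"
    and "dominant N R B Y \<Longrightarrow> top_cycle N R B \<subseteq> Y"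
proof -
  have "\<exists>!X. dominant N R B X \<and> (\<forall>Y. dominant N R B Y \<longrightarrow> X \<subseteq> Y)"
    using ex_least_dominant[OF assms] by (meson subset_antisym)
  then have "dominant N R B (top_cycle N R B) \<and>
      (\<forall>Y. dominant N R B Y \<longrightarrow> top_cycle N R B \<subseteq> Y)"
    unfolding top_cycle_def by (rule theI')
  then show "dominant N R B (top_cycle N R B)"
    and "dominant N R B Y \<Longrightarrow> top_cycle N R B \<subseteq> Y"
    by blast+
qed

lemma dominantD:
  "dominant N R B X \<Longrightarrow> u \<in> X \<Longrightarrow> w \<in> B \<Longrightarrow> w \<notin> X \<Longrightarrow> maj_strict N R u w"
  unfolding dominant_def by blast

lemma dominant_Diff_singleton:
  "dominant N R B X \<Longrightarrow> a \<notin> X \<Longrightarrow> dominant N R (B - {a}) X"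
  unfolding dominant_def by blast

lemma dominant_extend_singleton:
  "dominant N R (B - {a}) X \<Longrightarrow> a \<in> B \<Longrightarrow> (\<And>u. u \<in> X \<Longrightarrow> maj_strict N R u a)
    \<Longrightarrow> dominant N R B X"
  unfolding dominant_def by blast

lemma top_cycle_remove_swap:
  assumes "finite B" "x \<in> B" "y \<in> B" "x \<noteq> y"
    and "y \<in> top_cycle N R B" "y \<notin> top_cycle N R (B - {x})"
  shows "x \<in> top_cycle N R (B - {y})"
proof (rule ccontr)
  define Tx where "Tx = top_cycle N R (B - {x})"
  define Ty where "Ty = top_cycle N R (B - {y})"
  assume "x \<notin> top_cycle N R (B - {y})"
  then have "x \<notin> Ty" by (simp add: Ty_def)
  have "y \<notin> Tx" using assms(6) by (simp add: Tx_def)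
  have Tx: "dominant N R (B - {x}) Tx"
    unfolding Tx_def using assms(1-4) by (intro top_cycle_least_dominant(1)) auto
  have Ty: "dominant N R (B - {y}) Ty"
    unfolding Ty_def using assms(1-4) by (intro top_cycle_least_dominant(1)) auto
  have "B - {y} - {x} = B - {x} - {y}" by blast
  then have Tx': "dominant N R (B - {x} - {y}) Tx" and Ty': "dominant N R (B - {x} - {y}) Ty"
    using dominant_Diff_singleton[OF Tx \<open>y \<notin> Tx\<close>] dominant_Diff_singleton[OF Ty \<open>x \<notin> Ty\<close>]
    by simp_all
  define M where "M = Tx \<inter> Ty"
  have "M = Tx \<or> M = Ty"
    using dominant_comparable[OF Tx' Ty'] unfolding M_def by blast
  then have "dominant N R (B - {x} - {y}) M"
    using Tx' Ty' by blast
  then have "dominant N R (B - {x}) M"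
    by (rule dominant_extend_singleton)
      (use assms(3,4) dominantD[OF Tx _ _ \<open>y \<notin> Tx\<close>] in \<open>auto simp: M_def\<close>)
  then have "dominant N R B M"
    by (rule dominant_extend_singleton)
      (use assms(2,4) dominantD[OF Ty _ _ \<open>x \<notin> Ty\<close>] in \<open>auto simp: M_def\<close>)
  then have "top_cycle N R B \<subseteq> Tx"
    using top_cycle_least_dominant(2)[OF assms(1)] assms(2) unfolding M_def by blast
  with assms(5) \<open>y \<notin> Tx\<close> show False by blast
qed

lemma top_cycle_remove_subset:
  assumes "finite B" "x \<in> B" "y \<in> B" "x \<noteq> y"
    and "y \<notin> top_cycle N R (B - {x})" "top_cycle N R (B - {y}) \<noteq> {x}"
  shows "top_cycle N R (B - {x}) \<subseteq> top_cycle N R (B - {y}) - {x}"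
proof -
  define Tx where "Tx = top_cycle N R (B - {x})"
  define Ty where "Ty = top_cycle N R (B - {y})"
  have "y \<notin> Tx" using assms(5) by (simp add: Tx_def)
  have Tx: "dominant N R (B - {x}) Tx"
    unfolding Tx_def using assms(1-4) by (intro top_cycle_least_dominant(1)) auto
  have Ty: "dominant N R (B - {y}) Ty"
    unfolding Ty_def using assms(1-4) by (intro top_cycle_least_dominant(1)) auto
  have Tx': "dominant N R (B - {x} - {y}) Tx"
    using Tx \<open>y \<notin> Tx\<close> by (rule dominant_Diff_singleton)
  have "Ty - {x} \<noteq> {}"
    using Ty assms(6) unfolding Ty_def dominant_def by blast
  with Ty have Ty': "dominant N R (B - {x} - {y}) (Ty - {x})"
    unfolding dominant_def by blast
  show ?thesis
  proof (cases "Ty - {x} \<subseteq> Tx")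
    case True
    have "dominant N R (B - {x}) (Ty - {x})"
      by (rule dominant_extend_singleton[OF Ty'])
        (use assms(3,4) True dominantD[OF Tx _ _ \<open>y \<notin> Tx\<close>] in auto)
    with assms(1-4) show ?thesis
      unfolding Tx_def Ty_def by (intro top_cycle_least_dominant(2)) auto
  next
    case False
    with dominant_comparable[OF Tx' Ty'] show ?thesis
      unfolding Tx_def Ty_def by blast
  qed
qed

theorem lemma3:
  fixes N :: "'v set" and A :: "'a set" and R :: "'v \<Rightarrow> ('a \<times> 'a) set" and x y :: 'a
  assumes "profile N A R"
    and "connector N A R x"
    and "y \<in> connected_set N A R x"
  shows "connected_set N A R y \<subseteq> connected_set N A R x
         \<or> (\<forall>z\<in>A - {x, y}. maj_strict N R x z)"
proof -
  have "finite A" "x \<in> A"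
    using assms(1,2) by (simp_all add: profile_def connector_def)
  have y: "y \<in> top_cycle N R A" "y \<notin> top_cycle N R (A - {x})" "y \<noteq> x"
    using assms(3) unfolding connected_set_def by auto
  have "y \<in> A"
    using y(1) top_cycle_least_dominant(1)[OF \<open>finite A\<close>] \<open>x \<in> A\<close>
    unfolding dominant_def by blast
  note xy = \<open>finite A\<close> \<open>x \<in> A\<close> \<open>y \<in> A\<close> y(3)[symmetric]
  have "x \<in> top_cycle N R (A - {y})"
    using top_cycle_remove_swap[OF xy y(1,2)] .
  show ?thesis
  proof (cases "top_cycle N R (A - {y}) = {x}")
    case True
    have "dominant N R (A - {y}) {x}"
      using True top_cycle_least_dominant(1)[of "A - {y}" N R] xy by auto
    then show ?thesis
      by (auto dest: dominantD)
  next
    case False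
    with top_cycle_remove_subset[OF xy y(2)] \<open>x \<in> top_cycle N R (A - {y})\<close>
    show ?thesis
      unfolding connected_set_def by blast
  qed
qed

end
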